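(* Let $S = R\cup B$ be a finite set of points in the plane in general position (no three collinear), colored red ($R$) and blue ($B$), with $R$ and $B$ linearly separable. Suppose there exist $r\in R$, $b\in B$, an edge $e$ of $CH(R)$ and an edge $e'$ of $CH(B)$ such that the interiors of $e$ and of $e'$ both intersect the interior of the segment $\overline{rb}$. Then condition C1 or condition C2 holds.
   Context: A $4$-hole of $S$ is a simple quadrilateral with vertices in $S$ and no point of $S$ in its interior; it is convex if the quadrilateral is convex, and balanced if it has exactly two red and two blue vertices. $CH(X)$ is the convex hull of $X$; $\Delta xyz$ is the open triangle with vertices $x,y,z$; for non-collinear $a,b,c$, $\mathcal{W}(a,b,c)$ is the open convex region bounded by the rays from $a$ through $b$ and from $a$ through $c$. An edge $e$ of $CH(R)$ and an edge $e'$ of $CH(B)$ see each other if the union of their vertex sets is the vertex set of a balanced convex $4$-hole whose interior intersects neither $CH(R)$ nor $CH(B)$. Condition C1: there exist an edge $e$ of $CH(R)$ and an edge $e'$ of $CH(B)$ that see each other. Condition C2: there exist an edge $\overline{uv}$ of $CH(R)$ and points $b,z\in B$ with $z\in\Delta uvb$, $R\cap\Delta uvb=\emptyset$ and $R\cap\mathcal{W}(b,u,v)\ne\emptyset$; or the same statement holds with the roles of $R$ and $B$ swapped. *)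

theory Defs
  imports "HOL-Analysis.Analysis"
begin

type_synonym point = "real^2"

definition general_position :: "point set \<Rightarrow> bool" where
  "general_position S \<longleftrightarrow>
     (\<forall>p\<in>S. \<forall>q\<in>S. \<forall>r\<in>S. p \<noteq> q \<and> p \<noteq> r \<and> q \<noteq> r \<longrightarrow> \<not> collinear {p, q, r})"

definition linearly_separable :: "point set \<Rightarrow> point set \<Rightarrow> bool" where
  "linearly_separable R B \<longleftrightarrow>
     (\<exists>a c. a \<noteq> 0 \<and> (\<forall>x\<in>R. a \<bullet> x < c) \<and> (\<forall>y\<in>B. a \<bullet> y > c))"

definition hull_edge :: "point set \<Rightarrow> point \<Rightarrow> point \<Rightarrow> bool" where
  "hull_edge X u v \<longleftrightarrow> u \<in> X \<and> v \<in> X \<and> u \<noteq> v \<and> closed_segment u v face_of convex hull X"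

definition open_triangle :: "point \<Rightarrow> point \<Rightarrow> point \<Rightarrow> point set" where
  "open_triangle x y z = interior (convex hull {x, y, z})"

definition wedge :: "point \<Rightarrow> point \<Rightarrow> point \<Rightarrow> point set" where
  "wedge a b c = {a + s *\<^sub>R (b - a) + t *\<^sub>R (c - a) | s t. s > 0 \<and> t > 0}"

definition convex_4hole :: "point set \<Rightarrow> point set \<Rightarrow> bool" where
  "convex_4hole S Q \<longleftrightarrow> Q \<subseteq> S \<and> card Q = 4 \<and>
     (\<forall>p\<in>Q. p \<notin> convex hull (Q - {p})) \<and>
     S \<inter> interior (convex hull Q) = {}"

definition balanced :: "point set \<Rightarrow> point set \<Rightarrow> point set \<Rightarrow> bool" where
  "balanced R B Q \<longleftrightarrow> card (Q \<inter> R) = 2 \<and> card (Q \<inter> B) = 2"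

definition see_each_other :: "point set \<Rightarrow> point set \<Rightarrow> point \<Rightarrow> point \<Rightarrow> point \<Rightarrow> point \<Rightarrow> bool" where
  "see_each_other R B u v u' v' \<longleftrightarrow>
     hull_edge R u v \<and> hull_edge B u' v' \<and>
     convex_4hole (R \<union> B) {u, v, u', v'} \<and> balanced R B {u, v, u', v'} \<and>
     interior (convex hull {u, v, u', v'}) \<inter> convex hull R = {} \<and>
     interior (convex hull {u, v, u', v'}) \<inter> convex hull B = {}"

definition cond_C1 :: "point set \<Rightarrow> point set \<Rightarrow> bool" where
  "cond_C1 R B \<longleftrightarrow> (\<exists>u v u' v'. see_each_other R B u v u' v')"

definition C2_aux :: "point set \<Rightarrow> point set \<Rightarrow> bool" where
  "C2_aux R B \<longleftrightarrow> (\<exists>u v b z. hull_edge R u v \<and> b \<in> B \<and> z \<in> B \<and>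
      z \<in> open_triangle u v b \<and> R \<inter> open_triangle u v b = {} \<and>
      R \<inter> wedge b u v \<noteq> {})"

definition cond_C2 :: "point set \<Rightarrow> point set \<Rightarrow> bool" where
  "cond_C2 R B \<longleftrightarrow> C2_aux R B \<or> C2_aux B R"

end

(*
  Let p and q be the points where rb crosses the edges uv of CH(R) and u'v' of CH(B), and let
  a x \<le> \<beta> and a' x \<le> \<beta>' be supporting half-planes exposing these edges.  Since CH(R) and CH(B)
  are separated, p comes before q on the way from r to b.  If a blue point lies in the triangle
  uvb, or a red point in u'v'r, then uv (resp. u'v') together with b (resp. r) witnesses C2:
  the triangle lies beyond the supporting line and is thus free of red points, and r lies in
  the wedge at b spanned by u and v because rb crosses uv.  Otherwise both triangles are empty,
  which forces u', v' strictly beyond the line of uv and u, v strictly beyond the line of u'v';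
  then the quadrilateral uvu'v' is convex and lies outside both hulls, so uv and u'v' see each
  other (C1).
*)
theory Submission
  imports Defs
begin

lemma affine_open_segment_endpoint:
  assumes "affine S" "r \<in> S" "p \<in> S" "p \<in> open_segment r b"
  shows "b \<in> S"
proof -
  obtain s where s: "0 < s" "p = (1 - s) *\<^sub>R r + s *\<^sub>R b"
    using assms(4) by (auto simp: in_segment)
  then have "b = (1 / s) *\<^sub>R p + (1 - 1 / s) *\<^sub>R r"
    by (simp add: scaleR_add_right scaleR_diff_left scaleR_diff_right)
  then show ?thesis
    using mem_affine[OF assms(1,3,2)] by simp
qed

lemma endpoint_in_open_segment:
  fixes u v :: "'a::real_vector"
  assumes p: "p \<in> open_segment u v" and w: "w \<in> affine hull {u, v}" "w \<notin> closed_segment u v"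
  shows "u \<in> open_segment p w \<or> v \<in> open_segment p w"
proof -
  obtain al where al: "0 < al" "al < 1" "p = u + al *\<^sub>R (v - u)"
    using p by (auto simp: in_segment algebra_simps)
  obtain lam where lam: "w = u + lam *\<^sub>R (v - u)"
  proof -
    obtain x y where "w = x *\<^sub>R u + y *\<^sub>R v" "x + y = 1"
      using w(1) unfolding affine_hull_2 by blast
    then have "w = u + y *\<^sub>R (v - u)"
      by (simp add: algebra_simps flip: scaleR_add_left)
    then show thesis by (rule that)
  qed
  have pw: "p \<noteq> w" using p w(2) open_closed_segment by blast
  have comb: "(1 - mu) *\<^sub>R p + mu *\<^sub>R w = u + ((1 - mu) * al + mu * lam) *\<^sub>R (v - u)" for mu
    by (simp add: al(3) lam algebra_simps)
  have "lam < 0 \<or> 1 < lam"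
  proof (rule ccontr)
    assume "\<not> (lam < 0 \<or> 1 < lam)"
    then have "w \<in> closed_segment u v"
      unfolding lam in_segment by (intro exI[of _ lam]) (auto simp: algebra_simps)
    with w(2) show False by simp
  qed
  then show ?thesis
  proof
    assume "lam < 0"
    define mu where "mu = al / (al - lam)"
    have "0 < al - lam" using al \<open>lam < 0\<close> by simp
    then have "0 < mu" "mu < 1" "(1 - mu) * al + mu * lam = 0"
      using al \<open>lam < 0\<close> by (simp_all add: mu_def field_simps)
    then have "u \<in> open_segment p w"
      using comb[of mu] pw unfolding in_segment by auto
    then show ?thesis ..
  next
    assume "1 < lam"
    define mu where "mu = (1 - al) / (lam - al)"
    have "0 < lam - al" using al \<open>1 < lam\<close> by simp
    then have "0 < mu" "mu < 1" "mu * (lam - al) = 1 - al"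
      using al \<open>1 < lam\<close> by (simp_all add: mu_def field_simps)
    then have "0 < mu" "mu < 1" "(1 - mu) * al + mu * lam = 1"
      by (simp_all add: algebra_simps)
    then have "v \<in> open_segment p w"
      using comb[of mu] pw unfolding in_segment by auto
    then show ?thesis ..
  qed
qed

lemma inner_open_segment_increasing:
  fixes a :: "'a::real_inner"
  assumes "p \<in> open_segment r q" "a \<bullet> r < a \<bullet> p"
  shows "a \<bullet> p < a \<bullet> q"
proof -
  obtain s where s: "0 < s" "s < 1" "p = r + s *\<^sub>R (q - r)"
    using assms(1) by (auto simp: in_segment algebra_simps)
  have rp: "a \<bullet> p - a \<bullet> r = s * (a \<bullet> q - a \<bullet> r)"
    and pq: "a \<bullet> q - a \<bullet> p = (1 - s) * (a \<bullet> q - a \<bullet> r)"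
    unfolding s(3) by (simp_all add: inner_add_right inner_diff_right algebra_simps)
  have "0 < a \<bullet> q - a \<bullet> r"
    using zero_less_mult_pos[of s "a \<bullet> q - a \<bullet> r"] rp s(1) assms(2) by linarith
  with pq s(2) show ?thesis
    by (smt (verit) mult_pos_pos)
qed

lemma open_segment_order_by_inner:
  fixes g :: "'a::real_inner"
  assumes p: "p \<in> open_segment r b" and q: "q \<in> open_segment r b"
    and "g \<bullet> r < g \<bullet> b" "g \<bullet> p < g \<bullet> q"
  shows "p \<in> open_segment r q"
proof -
  obtain s where s: "0 < s" "s < 1" "p = r + s *\<^sub>R (b - r)"
    using p by (auto simp: in_segment algebra_simps)
  obtain t where t: "0 < t" "t < 1" "q = r + t *\<^sub>R (b - r)"
    using q by (auto simp: in_segment algebra_simps)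
  have "g \<bullet> q - g \<bullet> p = (t - s) * (g \<bullet> b - g \<bullet> r)"
    by (simp add: s(3) t(3) inner_add_right inner_diff_right algebra_simps)
  with assms(3,4) have "s < t"
    by (smt (verit) mult_nonpos_nonneg)
  have "p = (1 - s / t) *\<^sub>R r + (s / t) *\<^sub>R q"
    using t(1) by (simp add: s(3) t(3) algebra_simps)
  moreover have "r \<noteq> q" "p \<noteq> q"
    using q assms(4) by (auto simp: open_segment_def)
  ultimately show ?thesis
    using s(1) t(1) \<open>s < t\<close> unfolding in_segment by (auto intro!: exI[of _ "s / t"])
qed

lemma open_segment_crosses_hyperplane:
  fixes a :: "'a::real_inner"
  assumes "a \<bullet> x < c" "c < a \<bullet> y"
  shows "\<exists>w\<in>open_segment x y. a \<bullet> w = c"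
proof -
  define t where "t = (c - a \<bullet> x) / (a \<bullet> y - a \<bullet> x)"
  have t: "0 < t" "t < 1" using assms by (auto simp: t_def field_simps)
  define w where "w = (1 - t) *\<^sub>R x + t *\<^sub>R y"
  have "a \<bullet> w = a \<bullet> x + t * (a \<bullet> y - a \<bullet> x)"
    by (simp add: w_def inner_add_right algebra_simps)
  also have "\<dots> = c" using assms by (simp add: t_def)
  finally have "a \<bullet> w = c" .
  moreover have "w \<in> open_segment x y"
    using t assms unfolding w_def in_segment by auto
  ultimately show ?thesis by blast
qed

lemma collinear_on_hyperplane:
  fixes a :: "real^2"
  assumes "a \<noteq> 0" and "\<forall>x\<in>S. a \<bullet> x = c"
  shows "collinear S"
proof -
  have "aff_dim S \<le> aff_dim {x. a \<bullet> x = c}"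
    using assms(2) by (intro aff_dim_subset) auto
  then show ?thesis
    using assms(1) by (simp add: collinear_aff_dim)
qed

lemma convex_comb_in_interior_triangle:
  fixes A B C :: point
  assumes "\<not> collinear {A, B, C}" and "x > 0" "y > 0" "z > 0" "x + y + z = 1"
  shows "x *\<^sub>R A + y *\<^sub>R B + z *\<^sub>R C \<in> interior (convex hull {A, B, C})"
proof -
  have d: "A \<noteq> B" "A \<noteq> C" "B \<noteq> C"
    using assms(1) by (auto simp: insert_commute)
  have "\<not> affine_dependent {A, B, C}"
    using assms(1) collinear_3_eq_affine_dependent by blast
  moreover have "card {A, B, C} = 3" using d by auto
  moreover
  define f where "f = (\<lambda>P. if P = A then x else if P = B then y else z)"
  have "\<forall>P\<in>{A, B, C}. 0 < f P"
    using assms(2-4) by (simp add: f_def)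
  moreover have "sum f {A, B, C} = 1" "(\<Sum>P\<in>{A, B, C}. f P *\<^sub>R P) = x *\<^sub>R A + y *\<^sub>R B + z *\<^sub>R C"
    using d assms(5) by (simp_all add: f_def algebra_simps)
  ultimately show ?thesis
    by (subst interior_convex_hull_explicit_minimal) auto
qed

lemma open_segment_to_open_edge_in_interior:
  fixes r u v :: point
  assumes "\<not> collinear {u, v, r}" "q \<in> open_segment u v" "p \<in> open_segment r q"
  shows "p \<in> interior (convex hull {u, v, r})"
proof -
  obtain k where k: "0 < k" "k < 1" "q = (1 - k) *\<^sub>R u + k *\<^sub>R v"
    using assms(2) by (auto simp: in_segment)
  obtain s where s: "0 < s" "s < 1" "p = (1 - s) *\<^sub>R r + s *\<^sub>R q"
    using assms(3) by (auto simp: in_segment)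
  have "(s * (1 - k)) *\<^sub>R u + (s * k) *\<^sub>R v + (1 - s) *\<^sub>R r \<in> interior (convex hull {u, v, r})"
    using s k by (intro convex_comb_in_interior_triangle[OF assms(1)]) (simp_all add: algebra_simps)
  moreover have "p = (s * (1 - k)) *\<^sub>R u + (s * k) *\<^sub>R v + (1 - s) *\<^sub>R r"
    by (simp add: s(3) k(3) algebra_simps)
  ultimately show ?thesis by simp
qed

lemma not_in_convex_hull_above:
  fixes a :: "'a::real_inner"
  assumes "a \<bullet> x = c" "a \<bullet> y = c" "a \<bullet> z > c" "a \<bullet> w > c" "x \<noteq> y"
  shows "x \<notin> convex hull {y, z, w}"
proof
  assume "x \<in> convex hull {y, z, w}"
  then obtain l1 l2 l3 where l: "0 \<le> l1" "0 \<le> l2" "0 \<le> l3" "l1 + l2 + l3 = 1"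
    "x = l1 *\<^sub>R y + l2 *\<^sub>R z + l3 *\<^sub>R w"
    by (auto simp: convex_hull_3)
  have "l1 = 1 - l2 - l3" using l(4) by simp
  then have "c = (1 - l2 - l3) * c + l2 * (a \<bullet> z) + l3 * (a \<bullet> w)"
    using assms(1,2) by (simp add: l(5) inner_add_right)
  then have "l2 * (a \<bullet> z - c) + l3 * (a \<bullet> w - c) = 0"
    by (simp add: algebra_simps)
  moreover have "l2 * (a \<bullet> z - c) \<ge> 0" "l3 * (a \<bullet> w - c) \<ge> 0"
    using l assms by auto
  ultimately have "l2 * (a \<bullet> z - c) = 0" "l3 * (a \<bullet> w - c) = 0"
    by linarith+
  then have "l2 = 0" "l3 = 0"
    using assms(3,4) by simp_all
  with l assms(5) show False by simp
qed

lemma interior_convex_hull_disjoint_halfspace: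
  fixes a :: "'a::euclidean_space"
  assumes "a \<noteq> 0" "\<forall>x\<in>K. a \<bullet> x \<le> c" "\<forall>q\<in>Q. a \<bullet> q \<ge> c"
  shows "interior (convex hull Q) \<inter> K = {}"
proof -
  have "convex hull Q \<subseteq> {x. a \<bullet> x \<ge> c}"
    using assms(3) by (intro hull_minimal) (auto simp: convex_halfspace_ge)
  then have "interior (convex hull Q) \<subseteq> {x. a \<bullet> x > c}"
    using interior_mono interior_halfspace_ge[OF assms(1)] by metis
  then show ?thesis using assms(2) by fastforce
qed

lemma general_position_not_collinear:
  assumes "general_position S" "x \<in> S" "y \<in> S" "z \<in> S" "x \<noteq> y" "x \<noteq> z" "y \<noteq> z"
  shows "\<not> collinear {x, y, z}"
  using assms unfolding general_position_def by blast

lemma linearly_separable_sym: "linearly_separable R B \<Longrightarrow> linearly_separable B R"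
proof -
  assume "linearly_separable R B"
  then obtain a c where "a \<noteq> 0" "\<forall>x\<in>R. a \<bullet> x < c" "\<forall>y\<in>B. a \<bullet> y > c"
    by (auto simp: linearly_separable_def)
  then show ?thesis
    unfolding linearly_separable_def by (intro exI[of _ "- a"] exI[of _ "- c"]) auto
qed

lemma linearly_separable_disjoint:
  assumes "linearly_separable R B"
  shows "R \<inter> B = {}"
proof -
  obtain g c where "\<forall>x\<in>R. g \<bullet> x < c" "\<forall>y\<in>B. g \<bullet> y > c"
    using assms by (auto simp: linearly_separable_def)
  then show ?thesis by fastforce
qed

lemma linearly_separable_hulls:
  assumes "linearly_separable R B"
  obtains g c where "\<forall>x\<in>convex hull R. g \<bullet> x < c" "\<forall>y\<in>convex hull B. g \<bullet> y > c"
proof -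
  obtain g c where "\<forall>x\<in>R. g \<bullet> x < c" "\<forall>y\<in>B. g \<bullet> y > c"
    using assms by (auto simp: linearly_separable_def)
  then have "convex hull R \<subseteq> {x. g \<bullet> x < c}" "convex hull B \<subseteq> {y. g \<bullet> y > c}"
    by (simp_all add: hull_minimal subsetI convex_halfspace_lt convex_halfspace_gt)
  then show thesis using that by blast
qed

definition exposes_edge :: "'a::real_inner \<Rightarrow> real \<Rightarrow> 'a set \<Rightarrow> 'a \<Rightarrow> 'a \<Rightarrow> bool" where
  "exposes_edge a \<beta> X u v \<longleftrightarrow>
     convex hull X \<subseteq> {x. a \<bullet> x \<le> \<beta>} \<and> convex hull X \<inter> {x. a \<bullet> x = \<beta>} = closed_segment u v"

lemma hull_edge_exposed:
  assumes "finite X" "hull_edge X u v"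
  obtains a \<beta> where "exposes_edge a \<beta> X u v"
proof -
  have "polyhedron (convex hull X)"
    by (simp add: assms(1) polytope_convex_hull polytope_imp_polyhedron)
  moreover have "closed_segment u v face_of convex hull X"
    using assms(2) by (simp add: hull_edge_def)
  ultimately have "closed_segment u v exposed_face_of convex hull X"
    using exposed_face_of_polyhedron by blast
  then show thesis
    using that by (auto simp: exposed_face_of_def exposes_edge_def)
qed

lemma exposes_edge_segment:
  assumes "exposes_edge a \<beta> X u v" "x \<in> closed_segment u v"
  shows "a \<bullet> x = \<beta>"
  using assms by (auto simp: exposes_edge_def)

lemma crossing_edge_sides:
  assumes gp: "general_position (R \<union> B)" and "r \<in> R" "b \<in> B" "b \<notin> R"
    and e: "hull_edge R u v" "exposes_edge a \<beta> R u v"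
    and p: "p \<in> open_segment u v" "p \<in> open_segment r b"
  shows "a \<bullet> r < \<beta>" "\<beta> < a \<bullet> b"
proof -
  have uv: "u \<in> R" "v \<in> R" "u \<noteq> v" using e(1) by (auto simp: hull_edge_def)
  have r_off_edge: "r \<notin> closed_segment u v"
  proof
    assume "r \<in> closed_segment u v"
    moreover have "closed_segment u v \<subseteq> affine hull {u, v}"
      by (simp add: segment_convex_hull convex_hull_subset_affine_hull)
    ultimately have "b \<in> affine hull {u, v}"
      using affine_open_segment_endpoint[OF affine_affine_hull _ _ p(2)] p(1) open_closed_segment
      by blast
    then have "collinear {u, v, b}"
      by (rule affine_hull_3_imp_collinear)
    with general_position_not_collinear[OF gp, of u v b] uv \<open>b \<in> B\<close> \<open>b \<notin> R\<close> show False
      by auto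
  qed
  have "a \<bullet> r \<le> \<beta>" "a \<bullet> r \<noteq> \<beta>"
    using e(2) r_off_edge hull_inc[OF \<open>r \<in> R\<close>] by (auto simp: exposes_edge_def)
  then show "a \<bullet> r < \<beta>" by simp
  moreover have "a \<bullet> p = \<beta>"
    using exposes_edge_segment[OF e(2)] p(1) open_closed_segment by blast
  ultimately show "\<beta> < a \<bullet> b"
    using inner_open_segment_increasing[OF p(2), of a] by simp
qed

lemma crossing_imp_in_wedge:
  assumes "p \<in> open_segment u v" "p \<in> open_segment r b"
  shows "r \<in> wedge b u v"
proof -
  obtain al where al: "0 < al" "al < 1" "p = (1 - al) *\<^sub>R u + al *\<^sub>R v"
    using assms(1) by (auto simp: in_segment)
  obtain s where s: "0 < s" "s < 1" "p = (1 - s) *\<^sub>R r + s *\<^sub>R b"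
    using assms(2) by (auto simp: in_segment)
  have "r - b = (1 / (1 - s)) *\<^sub>R ((1 - s) *\<^sub>R (r - b))"
    using s(2) by simp
  also have "(1 - s) *\<^sub>R (r - b) = (1 - al) *\<^sub>R (u - b) + al *\<^sub>R (v - b)"
    using al(3) s(3) by (simp add: algebra_simps)
  finally have "r = b + ((1 - al) / (1 - s)) *\<^sub>R (u - b) + (al / (1 - s)) *\<^sub>R (v - b)"
    by (simp add: scaleR_add_right diff_eq_eq add.commute)
  moreover have "(1 - al) / (1 - s) > 0" "al / (1 - s) > 0"
    using al s by simp_all
  ultimately show ?thesis
    unfolding wedge_def by blast
qed

lemma open_triangle_beyond_edge_disjoint:
  assumes "exposes_edge a \<beta> X u v" "a \<noteq> 0" "\<beta> < a \<bullet> b"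
  shows "X \<inter> open_triangle u v b = {}"
proof -
  have "\<forall>x\<in>convex hull X. a \<bullet> x \<le> \<beta>"
    using assms(1) by (auto simp: exposes_edge_def)
  moreover have "\<forall>q\<in>{u, v, b}. \<beta> \<le> a \<bullet> q"
    using assms(3) exposes_edge_segment[OF assms(1)] by auto
  ultimately have "open_triangle u v b \<inter> convex hull X = {}"
    unfolding open_triangle_def by (rule interior_convex_hull_disjoint_halfspace[OF assms(2)])
  then show ?thesis
    using hull_subset[of X convex] by blast
qed

lemma C2_aux_if_crossing:
  assumes gp: "general_position (R \<union> B)" and "r \<in> R" "b \<in> B" "b \<notin> R"
    and e: "hull_edge R u v" "exposes_edge a \<beta> R u v"
    and p: "p \<in> open_segment u v" "p \<in> open_segment r b"
    and z: "z \<in> B" "z \<in> open_triangle u v b"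
  shows "C2_aux R B"
proof -
  have "a \<bullet> r < \<beta>" "\<beta> < a \<bullet> b"
    using crossing_edge_sides[OF gp assms(2-4) e p] by auto
  then have "a \<noteq> 0" by auto
  have "R \<inter> open_triangle u v b = {}"
    by (rule open_triangle_beyond_edge_disjoint[OF e(2) \<open>a \<noteq> 0\<close> \<open>\<beta> < a \<bullet> b\<close>])
  moreover have "r \<in> wedge b u v"
    by (rule crossing_imp_in_wedge[OF p])
  ultimately show ?thesis
    unfolding C2_aux_def using e(1) z \<open>b \<in> B\<close> \<open>r \<in> R\<close> by blast
qed

lemma crossing_points_ordered:
  assumes sep: "linearly_separable R B" and "r \<in> R" "b \<in> B"
    and "u \<in> R" "v \<in> R" "u' \<in> B" "v' \<in> B"
    and p: "p \<in> open_segment u v" "p \<in> open_segment r b"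
    and q: "q \<in> open_segment u' v'" "q \<in> open_segment r b"
  shows "p \<in> open_segment r q"
proof -
  obtain g c where g: "\<forall>x\<in>convex hull R. g \<bullet> x < c" "\<forall>y\<in>convex hull B. g \<bullet> y > c"
    using linearly_separable_hulls[OF sep] by blast
  have "closed_segment u v \<subseteq> convex hull R" "closed_segment u' v' \<subseteq> convex hull B"
    using assms(4-7) by (simp_all add: segment_convex_hull hull_mono)
  then have "p \<in> convex hull R" "q \<in> convex hull B"
    using open_closed_segment[OF p(1)] open_closed_segment[OF q(1)] by blast+
  then have "g \<bullet> p < g \<bullet> q" "g \<bullet> r < g \<bullet> b"
    using g hull_inc[OF \<open>r \<in> R\<close>] hull_inc[OF \<open>b \<in> B\<close>] by fastforce+
  then show ?thesis
    using open_segment_order_by_inner[OF p(2) q(2)] by simp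
qed

lemma edge_endpoint_between:
  assumes sep: "linearly_separable R B"
    and e: "hull_edge R u v" "exposes_edge a \<beta> R u v" "a \<noteq> 0"
    and p: "p \<in> open_segment u v" and w: "w \<in> convex hull B" "a \<bullet> w = \<beta>"
  obtains x where "x \<in> R" "x \<in> open_segment p w"
proof -
  have uv: "u \<in> R" "v \<in> R" "u \<noteq> v" using e(1) by (auto simp: hull_edge_def)
  obtain g c where g: "\<forall>x\<in>convex hull R. g \<bullet> x < c" "\<forall>y\<in>convex hull B. g \<bullet> y > c"
    using linearly_separable_hulls[OF sep] by blast
  have "closed_segment u v \<subseteq> convex hull R"
    using uv by (simp add: segment_convex_hull hull_mono)
  then have "w \<notin> closed_segment u v"
    using g w(1) by (meson less_asym subsetD)
  moreover have "collinear {u, v, w}"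
    using exposes_edge_segment[OF e(2)] w(2) e(3)
    by (intro collinear_on_hyperplane[of a _ \<beta>]) auto
  then have "w \<in> affine hull {u, v}"
    using collinear_3_affine_hull[OF uv(3)] by simp
  ultimately have "u \<in> open_segment p w \<or> v \<in> open_segment p w"
    by (intro endpoint_in_open_segment[OF p])
  with uv(1,2) that show thesis by blast
qed

text \<open>If \<open>u'\<close> were not strictly beyond the line of the edge \<open>uv\<close>, the segment from \<open>u'\<close> to \<open>q\<close>
  would meet that line in a point \<open>w\<close> of \<open>CH(B)\<close>; an endpoint of \<open>uv\<close> then lies between
  \<open>p\<close> and \<open>w\<close>, hence inside the triangle \<open>u'v'r\<close>.\<close>

lemma crossing_edges_far_side:
  assumes gp: "general_position (R \<union> B)" and sep: "linearly_separable R B"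
    and r: "r \<in> R" and b: "b \<in> B"
    and e: "hull_edge R u v" "exposes_edge a \<beta> R u v" and e': "hull_edge B u' v'"
    and p: "p \<in> open_segment u v" "p \<in> open_segment r b"
    and q: "q \<in> open_segment u' v'" "q \<in> open_segment r b"
    and free: "R \<inter> open_triangle u' v' r = {}"
  shows "\<beta> < a \<bullet> u'"
proof (rule ccontr)
  assume "\<not> \<beta> < a \<bullet> u'"
  have uv: "u \<in> R" "v \<in> R" "u \<noteq> v" using e(1) by (auto simp: hull_edge_def)
  have uv': "u' \<in> B" "v' \<in> B" "u' \<noteq> v'" using e' by (auto simp: hull_edge_def)
  have disj: "R \<inter> B = {}" by (rule linearly_separable_disjoint[OF sep])
  have ar: "a \<bullet> r < \<beta>"
    using crossing_edge_sides[OF gp r b _ e p] b disj by auto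
  then have "a \<noteq> 0" using exposes_edge_segment[OF e(2), of u] by auto
  have prq: "p \<in> open_segment r q"
    by (rule crossing_points_ordered[OF sep r b uv(1,2) uv'(1,2) p q])
  have "a \<bullet> p = \<beta>"
    using exposes_edge_segment[OF e(2)] p(1) open_closed_segment by blast
  then have aq: "\<beta> < a \<bullet> q"
    using inner_open_segment_increasing[OF prq, of a] ar by simp
  have "a \<bullet> u' \<noteq> \<beta>"
  proof
    assume "a \<bullet> u' = \<beta>"
    then have "collinear {u, v, u'}"
      using exposes_edge_segment[OF e(2)] \<open>a \<noteq> 0\<close>
      by (intro collinear_on_hyperplane[of a _ \<beta>]) auto
    with general_position_not_collinear[OF gp, of u v u'] uv uv' disj show False by auto
  qed
  with \<open>\<not> \<beta> < a \<bullet> u'\<close> have "a \<bullet> u' < \<beta>" by simp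
  then obtain w where w: "w \<in> open_segment u' q" "a \<bullet> w = \<beta>"
    using open_segment_crosses_hyperplane aq by blast
  have "closed_segment u' q \<subseteq> closed_segment u' v'"
    using open_closed_segment[OF q(1)] by (simp add: subset_closed_segment)
  then have "w \<in> closed_segment u' v'"
    using open_closed_segment[OF w(1)] by blast
  then have w_hull: "w \<in> convex hull {u', v', r}" "w \<in> convex hull B"
    using uv' hull_mono[of "{u', v'}" "{u', v', r}"] hull_mono[of "{u', v'}" B]
    by (auto simp: segment_convex_hull)
  obtain x where x: "x \<in> R" "x \<in> open_segment p w"
    using edge_endpoint_between[OF sep e \<open>a \<noteq> 0\<close> p(1) w_hull(2) w(2)] .
  have "\<not> collinear {u', v', r}"
    using general_position_not_collinear[OF gp, of u' v' r] uv' r disj by auto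
  then have "p \<in> interior (convex hull {u', v', r})"
    using open_segment_to_open_edge_in_interior q(1) prq by blast
  then have "open_segment p w \<subseteq> open_triangle u' v' r"
    unfolding open_triangle_def
    using in_interior_closure_convex_segment[OF convex_convex_hull] closure_subset w_hull(1)
    by blast
  with x free show False by blast
qed

lemma convex_position_beyond_lines:
  fixes a a' :: "'a::real_inner"
  assumes on: "a \<bullet> u = \<beta>" "a \<bullet> v = \<beta>" "a' \<bullet> u' = \<beta>'" "a' \<bullet> v' = \<beta>'"
    and above: "\<beta> < a \<bullet> u'" "\<beta> < a \<bullet> v'" "\<beta>' < a' \<bullet> u" "\<beta>' < a' \<bullet> v"
    and "u \<noteq> v" "u' \<noteq> v'"
  shows "\<forall>x\<in>{u, v, u', v'}. x \<notin> convex hull ({u, v, u', v'} - {x})"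
proof -
  have d: "u \<noteq> u'" "u \<noteq> v'" "v \<noteq> u'" "v \<noteq> v'" using on above by auto
  have "{u, v, u', v'} - {u} = {v, u', v'}" "{u, v, u', v'} - {v} = {u, u', v'}"
    "{u, v, u', v'} - {u'} = {v', u, v}" "{u, v, u', v'} - {v'} = {u', u, v}"
    using d assms(9,10) by auto
  then show ?thesis
    using not_in_convex_hull_above[of a u \<beta> v u' v'] not_in_convex_hull_above[of a v \<beta> u u' v']
      not_in_convex_hull_above[of a' u' \<beta>' v' u v] not_in_convex_hull_above[of a' v' \<beta>' u' u v]
      assms
    by auto
qed

lemma see_each_other_if_beyond_lines:
  assumes e: "hull_edge R u v" "exposes_edge a \<beta> R u v"
    and e': "hull_edge B u' v'" "exposes_edge a' \<beta>' B u' v'"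
    and above: "\<beta> < a \<bullet> u'" "\<beta> < a \<bullet> v'" "\<beta>' < a' \<bullet> u" "\<beta>' < a' \<bullet> v"
    and disj: "R \<inter> B = {}"
  shows "see_each_other R B u v u' v'"
proof -
  have uv: "u \<in> R" "v \<in> R" "u \<noteq> v" using e(1) by (auto simp: hull_edge_def)
  have uv': "u' \<in> B" "v' \<in> B" "u' \<noteq> v'" using e'(1) by (auto simp: hull_edge_def)
  have on: "a \<bullet> u = \<beta>" "a \<bullet> v = \<beta>" "a' \<bullet> u' = \<beta>'" "a' \<bullet> v' = \<beta>'"
    using exposes_edge_segment[OF e(2)] exposes_edge_segment[OF e'(2)] by auto
  have "a \<noteq> 0" "a' \<noteq> 0" using on above by auto
  define Q where "Q = {u, v, u', v'}"
  have iR: "interior (convex hull Q) \<inter> convex hull R = {}"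
    using e(2) on above(1,2)
    by (intro interior_convex_hull_disjoint_halfspace[OF \<open>a \<noteq> 0\<close>, of _ \<beta>])
       (auto simp: Q_def exposes_edge_def)
  have iB: "interior (convex hull Q) \<inter> convex hull B = {}"
    using e'(2) on above(3,4)
    by (intro interior_convex_hull_disjoint_halfspace[OF \<open>a' \<noteq> 0\<close>, of _ \<beta>'])
       (auto simp: Q_def exposes_edge_def)
  have "(R \<union> B) \<inter> interior (convex hull Q) = {}"
    using iR iB hull_subset[of R convex] hull_subset[of B convex] by blast
  moreover have "u \<noteq> u'" "u \<noteq> v'" "v \<noteq> u'" "v \<noteq> v'" using uv uv' disj by auto
  then have "card Q = 4" using uv(3) uv'(3) by (simp add: Q_def)
  ultimately have "convex_4hole (R \<union> B) Q"
    using convex_position_beyond_lines[OF on above uv(3) uv'(3)] uv uv'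
    by (auto simp: convex_4hole_def Q_def)
  moreover have "Q \<inter> R = {u, v}" "Q \<inter> B = {u', v'}" using uv uv' disj by (auto simp: Q_def)
  then have "balanced R B Q" using uv(3) uv'(3) by (simp add: balanced_def)
  ultimately show ?thesis
    unfolding see_each_other_def using e(1) e'(1) iR iB by (simp add: Q_def)
qed

lemma see_each_other_if_triangles_free:
  assumes gp: "general_position (R \<union> B)" and sep: "linearly_separable R B"
    and rb: "r \<in> R" "b \<in> B"
    and e: "hull_edge R u v" "exposes_edge a \<beta> R u v"
    and e': "hull_edge B u' v'" "exposes_edge a' \<beta>' B u' v'"
    and p: "p \<in> open_segment u v" "p \<in> open_segment r b"
    and q: "q \<in> open_segment u' v'" "q \<in> open_segment r b"
    and freeB: "B \<inter> open_triangle u v b = {}" and freeR: "R \<inter> open_triangle u' v' r = {}"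
  shows "see_each_other R B u v u' v'"
proof -
  have gp': "general_position (B \<union> R)" using gp by (simp add: Un_commute)
  note sep' = linearly_separable_sym[OF sep]
  have p': "p \<in> open_segment b r" and pvu: "p \<in> open_segment v u"
    and q': "q \<in> open_segment b r" and qvu: "q \<in> open_segment v' u'"
    using p q by (simp_all add: open_segment_commute)
  have eR: "hull_edge R v u" and eB: "hull_edge B v' u'"
    using e(1) e'(1) by (auto simp: hull_edge_def closed_segment_commute)
  have freeB': "B \<inter> open_triangle v u b = {}" and freeR': "R \<inter> open_triangle v' u' r = {}"
    using freeB freeR by (simp_all add: open_triangle_def insert_commute)
  show ?thesis
  proof (rule see_each_other_if_beyond_lines[OF e e'])
    show "\<beta> < a \<bullet> u'"
      by (rule crossing_edges_far_side[OF gp sep rb e e'(1) p q freeR])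
    show "\<beta> < a \<bullet> v'"
      by (rule crossing_edges_far_side[OF gp sep rb e eB p qvu q(2) freeR'])
    show "\<beta>' < a' \<bullet> u"
      by (rule crossing_edges_far_side[OF gp' sep' rb(2,1) e' e(1) q(1) q' p(1) p' freeB])
    show "\<beta>' < a' \<bullet> v"
      by (rule crossing_edges_far_side[OF gp' sep' rb(2,1) e' eR q(1) q' pvu p' freeB'])
    show "R \<inter> B = {}"
      by (rule linearly_separable_disjoint[OF sep])
  qed
qed

theorem lemma8:
  fixes R B :: "point set" and r b u v u' v' :: point
  assumes "finite R" and "finite B"
    and "general_position (R \<union> B)"
    and "linearly_separable R B"
    and "r \<in> R" and "b \<in> B"
    and "hull_edge R u v" and "hull_edge B u' v'"
    and "open_segment u v \<inter> open_segment r b \<noteq> {}"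
    and "open_segment u' v' \<inter> open_segment r b \<noteq> {}"
  shows "cond_C1 R B \<or> cond_C2 R B"
proof -
  have "R \<inter> B = {}" by (rule linearly_separable_disjoint[OF assms(4)])
  then have "b \<notin> R" "r \<notin> B" using assms(5,6) by auto
  have gp': "general_position (B \<union> R)" using assms(3) by (simp add: Un_commute)
  obtain p where p: "p \<in> open_segment u v" "p \<in> open_segment r b" using assms(9) by blast
  obtain q where q: "q \<in> open_segment u' v'" "q \<in> open_segment r b" using assms(10) by blast
  obtain a \<beta> where aR: "exposes_edge a \<beta> R u v" using hull_edge_exposed[OF assms(1,7)] .
  obtain a' \<beta>' where aB: "exposes_edge a' \<beta>' B u' v'" using hull_edge_exposed[OF assms(2,8)] .
  consider (blue_in_uvb) z where "z \<in> B" "z \<in> open_triangle u v b"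
    | (red_in_uvr) z where "z \<in> R" "z \<in> open_triangle u' v' r"
    | (free) "B \<inter> open_triangle u v b = {}" "R \<inter> open_triangle u' v' r = {}"
    by blast
  then show ?thesis
  proof cases
    case blue_in_uvb
    then have "C2_aux R B"
      by (rule C2_aux_if_crossing[OF assms(3,5,6) \<open>b \<notin> R\<close> assms(7) aR p])
    then show ?thesis by (simp add: cond_C2_def)
  next
    case red_in_uvr
    then have "C2_aux B R"
      using C2_aux_if_crossing[OF gp' assms(6,5) \<open>r \<notin> B\<close> assms(8) aB q(1)] q(2)
      by (simp add: open_segment_commute)
    then show ?thesis by (simp add: cond_C2_def)
  next
    case free
    then have "see_each_other R B u v u' v'"
      by (rule see_each_other_if_triangles_free[OF assms(3,4,5,6,7) aR assms(8) aB p q])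
    then show ?thesis by (auto simp: cond_C1_def)
  qed
qed

end
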